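(* For every $t \ge t_1$ and $p\ge 0$ we have $H_0^p(L^t)=H_0^p(K^t)$, but the equality $H_k^p(L^t)=H_k^p(K^t)$ does not hold in general for $1\le k \le \dim(K)-1$.
   Context: Let $X$ be a finite set and $(\mathcal{P}^{t_m})_{m\le M}$ a (not necessarily hierarchical) sequence of partitions of $X$ indexed by scales $t_1<t_2<\dots<t_M$; write $x\sim_t y$ if $x,y$ lie in the same cluster of the partition $\mathcal{P}^t$ at scale $t$ (the scale function being piecewise constant, $\mathcal{P}^t=\mathcal{P}^{t_m}$ for $t_m\le t<t_{m+1}$). The Multiscale Clustering Filtration (MCF) is $K^{t_m}=\bigcup_{l\le m}\{\Delta C : C\in\mathcal{P}^{t_l}\}$, where $\Delta C$ is the solid simplex of all non-empty subsets of $C$; its continuous-indexed version is $K^t=K^{t_m}$ for the largest $t_m\le t$, and $K:=K^{t_M}$. The Cluster Assignment Graph (CAG) is the undirected weighted graph on vertex set $X$ with adjacency matrix $A_{xy}=\min\{t\ge t_1 : x\sim_t y\}$ (with $\min\emptyset=0$, meaning $x,y$ are not linked if never in a common cluster). For $t\ge t_1$, $L^t$ is the clique complex of the thresholded CAG $G_t=(X,E_t)$ containing only the edges $\{x,y\}$ with $A_{xy}\le t$, giving the clique complex filtration $\mathcal{L}=(L^t)_{t\ge t_1}$. $H_k^p(\cdot)$ denotes the $p$-persistent $k$-th homology group (computed over $\mathbb{Z}_2$) along the respective filtration. *)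

theory Defs
  imports Complex_Main "HOL-Library.Disjoint_Sets"
begin

text \<open>A sequence of partitions P 0, ..., P (M-1) of a finite set X, indexed by
  strictly increasing real scales ts 0 < ts 1 < ... < ts (M-1).
  (Paper index m = 1..M corresponds to our m-1; t_1 = ts 0.)\<close>

definition mcf_data :: "'a set \<Rightarrow> nat \<Rightarrow> (nat \<Rightarrow> real) \<Rightarrow> (nat \<Rightarrow> 'a set set) \<Rightarrow> bool" where
  "mcf_data X M ts P \<longleftrightarrow> finite X \<and> M \<ge> 1 \<and> strict_mono_on {..<M} ts \<and>
     (\<forall>m<M. partition_on X (P m))"

definition partition_at :: "nat \<Rightarrow> (nat \<Rightarrow> real) \<Rightarrow> (nat \<Rightarrow> 'a set set) \<Rightarrow> real \<Rightarrow> 'a set set" where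
  "partition_at M ts P t = P (GREATEST m. m < M \<and> ts m \<le> t)"

definition same_cluster :: "nat \<Rightarrow> (nat \<Rightarrow> real) \<Rightarrow> (nat \<Rightarrow> 'a set set) \<Rightarrow> real \<Rightarrow> 'a \<Rightarrow> 'a \<Rightarrow> bool" where
  "same_cluster M ts P t x y \<longleftrightarrow> (\<exists>C \<in> partition_at M ts P t. x \<in> C \<and> y \<in> C)"

text \<open>Simplicial complexes are sets of simplices; a simplex is a nonempty finite vertex set.
  K^t = union of the solid simplices of all clusters at scales t_l <= t.\<close>
definition MCF :: "nat \<Rightarrow> (nat \<Rightarrow> real) \<Rightarrow> (nat \<Rightarrow> 'a set set) \<Rightarrow> real \<Rightarrow> 'a set set" where
  "MCF M ts P t = {\<sigma>. \<sigma> \<noteq> {} \<and> (\<exists>l<M. ts l \<le> t \<and> (\<exists>C \<in> P l. \<sigma> \<subseteq> C))}"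

definition CAG_linked :: "nat \<Rightarrow> (nat \<Rightarrow> real) \<Rightarrow> (nat \<Rightarrow> 'a set set) \<Rightarrow> 'a \<Rightarrow> 'a \<Rightarrow> bool" where
  "CAG_linked M ts P x y \<longleftrightarrow> {t. ts 0 \<le> t \<and> same_cluster M ts P t x y} \<noteq> {}"

text \<open>Adjacency matrix A_xy = min{t >= t_1 : x ~_t y}, with min of the empty set = 0.\<close>
definition CAG :: "nat \<Rightarrow> (nat \<Rightarrow> real) \<Rightarrow> (nat \<Rightarrow> 'a set set) \<Rightarrow> 'a \<Rightarrow> 'a \<Rightarrow> real" where
  "CAG M ts P x y =
     (if CAG_linked M ts P x y then Inf {t. ts 0 \<le> t \<and> same_cluster M ts P t x y} else 0)"

definition CAG_edge :: "nat \<Rightarrow> (nat \<Rightarrow> real) \<Rightarrow> (nat \<Rightarrow> 'a set set) \<Rightarrow> real \<Rightarrow> 'a \<Rightarrow> 'a \<Rightarrow> bool" where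
  "CAG_edge M ts P t x y \<longleftrightarrow> x \<noteq> y \<and> CAG_linked M ts P x y \<and> CAG M ts P x y \<le> t"

definition clique_complex :: "'a set \<Rightarrow> ('a \<Rightarrow> 'a \<Rightarrow> bool) \<Rightarrow> 'a set set" where
  "clique_complex V E = {\<sigma>. \<sigma> \<noteq> {} \<and> finite \<sigma> \<and> \<sigma> \<subseteq> V \<and>
                                (\<forall>x\<in>\<sigma>. \<forall>y\<in>\<sigma>. x \<noteq> y \<longrightarrow> E x y)}"

definition CAG_clique :: "'a set \<Rightarrow> nat \<Rightarrow> (nat \<Rightarrow> real) \<Rightarrow> (nat \<Rightarrow> 'a set set) \<Rightarrow> real \<Rightarrow> 'a set set" where
  "CAG_clique X M ts P t = clique_complex X (CAG_edge M ts P t)"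

text \<open>A Z_2 k-chain is a finite set of k-simplices (simplices with k+1 vertices);
  addition is symmetric difference.\<close>
definition chains :: "'a set set \<Rightarrow> nat \<Rightarrow> 'a set set set" where
  "chains S k = {c. finite c \<and> c \<subseteq> {\<sigma> \<in> S. card \<sigma> = k + 1}}"

definition chain_add :: "'a set set \<Rightarrow> 'a set set \<Rightarrow> 'a set set" where
  "chain_add c d = (c - d) \<union> (d - c)"

definition bd :: "nat \<Rightarrow> 'a set set \<Rightarrow> 'a set set" where
  "bd k c = (if k = 0 then {} else {\<tau>. card \<tau> = k \<and> odd (card {\<sigma> \<in> c. \<tau> \<subseteq> \<sigma>})})"

definition cycles :: "'a set set \<Rightarrow> nat \<Rightarrow> 'a set set set" where
  "cycles S k = {c \<in> chains S k. bd k c = {}}"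

definition boundaries :: "'a set set \<Rightarrow> nat \<Rightarrow> 'a set set set" where
  "boundaries S k = bd (k + 1) ` chains S (k + 1)"

definition hclass :: "'a set set \<Rightarrow> 'a set set set \<Rightarrow> 'a set set set" where
  "hclass c B = (\<lambda>b. chain_add c b) ` B"

text \<open>p-persistent k-th homology group of a filtration F at t: the image of
  H_k(F t) -> H_k(F (t+p)) induced by inclusion, i.e. the set of classes in
  H_k(F (t+p)) of k-cycles of F t.\<close>
definition pers_homology :: "nat \<Rightarrow> real \<Rightarrow> (real \<Rightarrow> 'a set set) \<Rightarrow> real \<Rightarrow> 'a set set set set" where
  "pers_homology k p F t = (\<lambda>c. hclass c (boundaries (F (t + p)) k)) ` cycles (F t) k"

definition cdim :: "'a set set \<Rightarrow> nat" where
  "cdim S = Max (card ` S) - 1"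

end

theory Submission
  imports Defs
begin

(* The complexes K^t and L^t have the same vertices and the same edges: the CAG weight A_xy is the
   first scale at which x and y share a cluster, so x and y are joined in G_t exactly when they are
   joined in K^t. Persistent H_0 only sees vertices and edges, hence it agrees for both filtrations.

   In higher degrees the clique complex fills in every clique of G_t, while K^t only contains the
   simplices spanned by actual clusters. Take k+2 points and let the clusters at scales 0, ..., k+1
   be the k+2 facets of the (k+1)-simplex Y they span. At scale k+1 the complex K^t is the boundary
   sphere of Y, whose fundamental cycle gives a nontrivial class in H_k, whereas G_t is complete,
   L^t is the full simplex and its H_k is trivial. *)

section \<open>The cluster assignment graph\<close>

lemma mcf_data_scale_mono:
  assumes "mcf_data X M ts P" "a \<le> b" "b < M"
  shows "ts a \<le> ts b"
  using assms unfolding mcf_data_def by (auto intro: strict_mono_on_leD)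

lemma mcf_data_cluster_subset:
  assumes "mcf_data X M ts P" "l < M" "C \<in> P l"
  shows "C \<subseteq> X"
  using assms unfolding mcf_data_def partition_on_def by blast

lemma mcf_data_cluster_exists:
  assumes "mcf_data X M ts P" "l < M" "x \<in> X"
  obtains C where "C \<in> P l" "x \<in> C"
  using assms unfolding mcf_data_def partition_on_def by blast

lemma partition_at_index:
  assumes "mcf_data X M ts P" "ts 0 \<le> t"
  defines "g \<equiv> GREATEST m. m < M \<and> ts m \<le> t"
  shows "g < M" "ts g \<le> t" "\<And>m. m < M \<Longrightarrow> ts m \<le> t \<Longrightarrow> m \<le> g"
proof -
  have "0 < M" using assms(1) unfolding mcf_data_def by auto
  then have "0 < M \<and> ts 0 \<le> t" using assms(2) by simp
  then show "g < M" "ts g \<le> t"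
    unfolding g_def using GreatestI_nat[of "\<lambda>m. m < M \<and> ts m \<le> t" 0 M] by auto
  show "m \<le> g" if "m < M" "ts m \<le> t" for m
    unfolding g_def using that Greatest_le_nat[of "\<lambda>m. m < M \<and> ts m \<le> t" m M] by auto
qed

lemma partition_at_scale:
  assumes mcf: "mcf_data X M ts P" and "l < M"
  shows "partition_at M ts P (ts l) = P l"
proof -
  let ?g = "GREATEST m. m < M \<and> ts m \<le> ts l"
  have t0: "ts 0 \<le> ts l" using mcf_data_scale_mono[OF mcf _ \<open>l < M\<close>] by simp
  have "l \<le> ?g" using partition_at_index(3)[OF mcf t0 \<open>l < M\<close>] by simp
  moreover have "\<not> l < ?g"
  proof
    assume "l < ?g"
    then have "ts l < ts ?g"
      using mcf partition_at_index(1)[OF mcf t0] \<open>l < M\<close> unfolding mcf_data_def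
      by (intro strict_mono_onD[of "{..<M}" ts]) auto
    then show False using partition_at_index(2)[OF mcf t0] by simp
  qed
  ultimately show ?thesis unfolding partition_at_def by simp
qed

lemma same_cluster_at_scale:
  assumes "mcf_data X M ts P" "l < M"
  shows "same_cluster M ts P (ts l) x y \<longleftrightarrow> (\<exists>C\<in>P l. x \<in> C \<and> y \<in> C)"
  using partition_at_scale[OF assms] unfolding same_cluster_def by simp

lemma same_cluster_imp_earlier_scale:
  assumes mcf: "mcf_data X M ts P" and "ts 0 \<le> t" "same_cluster M ts P t x y"
  shows "\<exists>l<M. ts l \<le> t \<and> (\<exists>C\<in>P l. x \<in> C \<and> y \<in> C)"
  using assms partition_at_index[OF mcf \<open>ts 0 \<le> t\<close>]
  unfolding same_cluster_def partition_at_def by blast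

lemma CAG_linked_iff:
  assumes mcf: "mcf_data X M ts P"
  shows "CAG_linked M ts P x y \<longleftrightarrow> (\<exists>l<M. \<exists>C\<in>P l. x \<in> C \<and> y \<in> C)"
proof
  assume "CAG_linked M ts P x y"
  then obtain t where "ts 0 \<le> t" "same_cluster M ts P t x y" unfolding CAG_linked_def by auto
  then show "\<exists>l<M. \<exists>C\<in>P l. x \<in> C \<and> y \<in> C"
    using same_cluster_imp_earlier_scale[OF mcf] by meson
next
  assume "\<exists>l<M. \<exists>C\<in>P l. x \<in> C \<and> y \<in> C"
  then obtain l where "l < M" "same_cluster M ts P (ts l) x y"
    using same_cluster_at_scale[OF mcf] by blast
  moreover have "ts 0 \<le> ts l" using mcf_data_scale_mono[OF mcf _ \<open>l < M\<close>] by simp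
  ultimately show "CAG_linked M ts P x y" unfolding CAG_linked_def by auto
qed

lemma CAG_eq_first_common_scale:
  assumes mcf: "mcf_data X M ts P" and "CAG_linked M ts P x y"
  defines "I \<equiv> {l. l < M \<and> (\<exists>C\<in>P l. x \<in> C \<and> y \<in> C)}"
  shows "CAG M ts P x y = ts (Min I)"
proof -
  let ?S = "{t. ts 0 \<le> t \<and> same_cluster M ts P t x y}"
  have "finite I" "I \<noteq> {}" using CAG_linked_iff[OF mcf] assms(2) unfolding I_def by auto
  then have min: "Min I \<in> I" "\<And>l. l \<in> I \<Longrightarrow> Min I \<le> l" by (auto intro: Min_in Min_le)
  then have "Min I < M" "same_cluster M ts P (ts (Min I)) x y"
    using same_cluster_at_scale[OF mcf] unfolding I_def by auto
  moreover have "ts 0 \<le> ts (Min I)" using mcf_data_scale_mono[OF mcf _ \<open>Min I < M\<close>] by simp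
  ultimately have "ts (Min I) \<in> ?S" by simp
  moreover have "ts (Min I) \<le> t" if "t \<in> ?S" for t
  proof -
    obtain l where "l < M" "ts l \<le> t" "\<exists>C\<in>P l. x \<in> C \<and> y \<in> C"
      using same_cluster_imp_earlier_scale[OF mcf, of t x y] \<open>t \<in> ?S\<close> by auto
    then have "ts (Min I) \<le> ts l" using mcf_data_scale_mono[OF mcf] min(2) unfolding I_def by simp
    then show ?thesis using \<open>ts l \<le> t\<close> by simp
  qed
  ultimately have "Inf ?S = ts (Min I)" by (rule cInf_eq_minimum)
  then show ?thesis using assms(2) unfolding CAG_def by simp
qed

lemma CAG_edge_iff:
  assumes mcf: "mcf_data X M ts P"
  shows "CAG_edge M ts P s x y \<longleftrightarrow> x \<noteq> y \<and> (\<exists>l<M. ts l \<le> s \<and> (\<exists>C\<in>P l. x \<in> C \<and> y \<in> C))"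
proof -
  define I where "I = {l. l < M \<and> (\<exists>C\<in>P l. x \<in> C \<and> y \<in> C)}"
  have "ts (Min I) \<le> s \<longleftrightarrow> (\<exists>l\<in>I. ts l \<le> s)" if "I \<noteq> {}"
  proof -
    have "finite I" unfolding I_def by simp
    then have min: "Min I \<in> I" "\<And>l. l \<in> I \<Longrightarrow> Min I \<le> l" using \<open>I \<noteq> {}\<close> by auto
    have "ts (Min I) \<le> ts l" if "l \<in> I" for l
      using mcf_data_scale_mono[OF mcf min(2)[OF that]] that unfolding I_def by simp
    then show ?thesis using min(1) by fastforce
  qed
  moreover have "CAG_linked M ts P x y \<longleftrightarrow> I \<noteq> {}"
    unfolding I_def CAG_linked_iff[OF mcf] by auto
  moreover have "CAG_linked M ts P x y \<Longrightarrow> CAG M ts P x y = ts (Min I)"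
    unfolding I_def by (rule CAG_eq_first_common_scale[OF mcf])
  ultimately have "CAG_edge M ts P s x y \<longleftrightarrow> x \<noteq> y \<and> (\<exists>l\<in>I. ts l \<le> s)"
    by (cases "I = {}") (simp_all add: CAG_edge_def)
  then show ?thesis unfolding I_def by blast
qed

lemma MCF_singleton:
  assumes mcf: "mcf_data X M ts P" and "ts 0 \<le> t"
  shows "{x} \<in> MCF M ts P t \<longleftrightarrow> x \<in> X"
proof
  assume "{x} \<in> MCF M ts P t"
  then obtain l C where "l < M" "C \<in> P l" "x \<in> C" unfolding MCF_def by auto
  then show "x \<in> X" using mcf_data_cluster_subset[OF mcf] by blast
next
  assume "x \<in> X"
  have "0 < M" using mcf unfolding mcf_data_def by simp
  obtain C where "C \<in> P 0" "x \<in> C" by (rule mcf_data_cluster_exists[OF mcf \<open>0 < M\<close> \<open>x \<in> X\<close>])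
  then show "{x} \<in> MCF M ts P t" unfolding MCF_def using \<open>0 < M\<close> \<open>ts 0 \<le> t\<close> by auto
qed

lemma CAG_clique_eq_MCF_edges:
  assumes mcf: "mcf_data X M ts P" and "ts 0 \<le> t" and "card \<sigma> \<in> {1, 2}"
  shows "\<sigma> \<in> CAG_clique X M ts P t \<longleftrightarrow> \<sigma> \<in> MCF M ts P t"
proof -
  consider "card \<sigma> = 1" | "card \<sigma> = 2" using \<open>card \<sigma> \<in> {1, 2}\<close> by blast
  then show ?thesis
  proof cases
    case 1
    then obtain x where "\<sigma> = {x}" by (rule card_1_singletonE)
    then show ?thesis
      using MCF_singleton[OF assms(1,2)] by (simp add: CAG_clique_def clique_complex_def)
  next
    case 2
    then obtain x y where \<sigma>: "\<sigma> = {x, y}" "x \<noteq> y" by (meson card_2_iff)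
    let ?common = "\<exists>l<M. ts l \<le> t \<and> (\<exists>C\<in>P l. x \<in> C \<and> y \<in> C)"
    have "?common \<Longrightarrow> x \<in> X \<and> y \<in> X" using mcf_data_cluster_subset[OF mcf] by blast
    then have "\<sigma> \<in> CAG_clique X M ts P t \<longleftrightarrow> ?common"
      using \<sigma> CAG_edge_iff[OF mcf] by (auto simp: CAG_clique_def clique_complex_def)
    moreover have "\<sigma> \<in> MCF M ts P t \<longleftrightarrow> ?common" using \<sigma> unfolding MCF_def by auto
    ultimately show ?thesis by simp
  qed
qed

section \<open>Homology of a simplex and of its boundary sphere\<close>

definition homology :: "'a set set \<Rightarrow> nat \<Rightarrow> 'a set set set set" where
  "homology S k = (\<lambda>c. hclass c (boundaries S k)) ` cycles S k"

lemma pers_homology_0: "pers_homology k 0 F t = homology (F t) k"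
  unfolding pers_homology_def homology_def by simp

lemma bd_empty [simp]: "bd k {} = {}"
  unfolding bd_def by simp

lemma chains_cong:
  assumes "\<And>\<sigma>. card \<sigma> = k + 1 \<Longrightarrow> \<sigma> \<in> S \<longleftrightarrow> \<sigma> \<in> T"
  shows "chains S k = chains T k"
  unfolding chains_def using assms by blast

lemma pers_homology_0_cong:
  assumes "\<And>\<sigma>. card \<sigma> = 1 \<Longrightarrow> \<sigma> \<in> F t \<longleftrightarrow> \<sigma> \<in> G t"
    and "\<And>\<sigma>. card \<sigma> = 2 \<Longrightarrow> \<sigma> \<in> F (t + p) \<longleftrightarrow> \<sigma> \<in> G (t + p)"
  shows "pers_homology 0 p F t = pers_homology 0 p G t"
proof -
  have "chains (F t) 0 = chains (G t) 0" by (rule chains_cong) (use assms(1) in simp)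
  then have "cycles (F t) 0 = cycles (G t) 0" unfolding cycles_def by simp
  moreover have "chains (F (t + p)) 1 = chains (G (t + p)) 1"
    by (rule chains_cong) (use assms(2) in simp)
  then have "boundaries (F (t + p)) 0 = boundaries (G (t + p)) 0"
    unfolding boundaries_def by simp
  ultimately show ?thesis unfolding pers_homology_def by simp
qed

lemma homology_card_ne_1:
  assumes "\<forall>\<sigma>\<in>S. card \<sigma> \<noteq> k + 2" "c \<in> cycles S k" "c \<noteq> {}"
  shows "card (homology S k) \<noteq> 1"
proof
  have "{\<sigma> \<in> S. card \<sigma> = k + 1 + 1} = {}" using assms(1) by auto
  then have "chains S (k + 1) = {{}}" unfolding chains_def by auto
  then have "boundaries S k = {{}}" unfolding boundaries_def by simp
  then have H: "homology S k = (\<lambda>c. {c}) ` cycles S k"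
    unfolding homology_def hclass_def chain_add_def by simp
  have "{} \<in> cycles S k" unfolding cycles_def chains_def by simp
  then have "{{}} \<in> homology S k" "{c} \<in> homology S k" unfolding H using assms(2) by auto
  moreover assume "card (homology S k) = 1"
  then obtain h where "homology S k = {h}" by (rule card_1_singletonE)
  ultimately show False using assms(3) by auto
qed

lemma bd_simplex: "bd (Suc k) {Y} = {\<tau>. \<tau> \<subseteq> Y \<and> card \<tau> = Suc k}"
  unfolding bd_def by (auto simp: Collect_conv_if)

lemma cofaces_in_simplex:
  assumes "finite Y" "\<tau> \<subseteq> Y"
  shows "{\<sigma>. \<sigma> \<subseteq> Y \<and> card \<sigma> = Suc (card \<tau>) \<and> \<tau> \<subseteq> \<sigma>} = (\<lambda>a. insert a \<tau>) ` (Y - \<tau>)"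
proof (intro set_eqI iffI)
  fix \<sigma> assume \<sigma>: "\<sigma> \<in> {\<sigma>. \<sigma> \<subseteq> Y \<and> card \<sigma> = Suc (card \<tau>) \<and> \<tau> \<subseteq> \<sigma>}"
  then have "finite \<sigma>" "finite \<tau>" using assms finite_subset by blast+
  then have "card (\<sigma> - \<tau>) = 1" using \<sigma> by (simp add: card_Diff_subset)
  then obtain a where "\<sigma> - \<tau> = {a}" by (rule card_1_singletonE)
  then show "\<sigma> \<in> (\<lambda>a. insert a \<tau>) ` (Y - \<tau>)" using \<sigma> by blast
next
  fix \<sigma> assume "\<sigma> \<in> (\<lambda>a. insert a \<tau>) ` (Y - \<tau>)"
  then obtain a where "a \<in> Y - \<tau>" "\<sigma> = insert a \<tau>" by blast
  moreover have "finite \<tau>" using assms finite_subset by blast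
  ultimately show "\<sigma> \<in> {\<sigma>. \<sigma> \<subseteq> Y \<and> card \<sigma> = Suc (card \<tau>) \<and> \<tau> \<subseteq> \<sigma>}"
    using assms(2) by auto
qed

lemma bd_bd_simplex:
  assumes "finite Y" "card Y = k + 2"
  shows "bd k (bd (k + 1) {Y}) = {}"
proof -
  have "card {\<sigma> \<in> bd (k + 1) {Y}. \<tau> \<subseteq> \<sigma>} \<in> {0, 2}" if "card \<tau> = k" for \<tau> :: "'a set"
  proof (cases "\<tau> \<subseteq> Y")
    case True
    have "inj_on (\<lambda>a. insert a \<tau>) (Y - \<tau>)" by (rule inj_onI) blast
    moreover have "card (Y - \<tau>) = 2"
      using True assms that by (simp add: card_Diff_subset finite_subset[OF True])
    moreover have "{\<sigma> \<in> bd (k + 1) {Y}. \<tau> \<subseteq> \<sigma>} = (\<lambda>a. insert a \<tau>) ` (Y - \<tau>)"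
      using cofaces_in_simplex[OF assms(1) True] that by (auto simp: bd_simplex)
    ultimately show ?thesis by (simp add: card_image)
  next
    case False
    then have none: "{\<sigma> \<in> bd (k + 1) {Y}. \<tau> \<subseteq> \<sigma>} = {}" by (auto simp: bd_simplex)
    show ?thesis unfolding none by simp
  qed
  then have "even (card {\<sigma> \<in> bd (k + 1) {Y}. \<tau> \<subseteq> \<sigma>})" if "card \<tau> = k" for \<tau> :: "'a set"
    using that by fastforce
  then show ?thesis unfolding bd_def[of k] by auto
qed

lemma bd_simplex_facets:
  assumes "finite Y" "card Y = k + 2"
  shows "bd (k + 1) {Y} = (\<lambda>a. Y - {a}) ` Y"
proof (intro set_eqI iffI)
  fix \<sigma> assume "\<sigma> \<in> bd (k + 1) {Y}"
  then have "\<sigma> \<subseteq> Y" "card \<sigma> = k + 1" by (simp_all add: bd_simplex)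
  then have "card (Y - \<sigma>) = 1" using assms by (simp add: card_Diff_subset finite_subset[OF _ assms(1)])
  then obtain a where "Y - \<sigma> = {a}" by (rule card_1_singletonE)
  then show "\<sigma> \<in> (\<lambda>a. Y - {a}) ` Y" using \<open>\<sigma> \<subseteq> Y\<close> by blast
next
  fix \<sigma> assume "\<sigma> \<in> (\<lambda>a. Y - {a}) ` Y"
  then show "\<sigma> \<in> bd (k + 1) {Y}" using assms by (auto simp: bd_simplex card_Diff_singleton)
qed

lemma simplex_cycle_cases:
  assumes Y: "finite Y" "card Y = k + 2" and "1 \<le> k"
    and c: "c \<subseteq> bd (k + 1) {Y}" "bd k c = {}"
  shows "c = {} \<or> c = bd (k + 1) {Y}"
proof -
  note facets = bd_simplex_facets[OF Y]
  have closed: "Y - {b} \<in> c" if "a \<in> Y" "b \<in> Y" "Y - {a} \<in> c" for a b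
  proof (rule ccontr)
    assume "Y - {b} \<notin> c"
    then have "a \<noteq> b" using that by blast
    \<comment> \<open>the ridge Y - {a, b} lies in exactly one facet of c, so it occurs in bd c\<close>
    define \<tau> where "\<tau> = Y - {a, b}"
    have \<tau>: "\<tau> \<subseteq> Y" "card \<tau> = k" "Y - \<tau> = {a, b}"
      using Y that \<open>a \<noteq> b\<close> by (auto simp: \<tau>_def card_Diff_subset)
    have "{\<sigma> \<in> c. \<tau> \<subseteq> \<sigma>} \<subseteq> {Y - {a}, Y - {b}}"
    proof
      fix \<sigma> assume "\<sigma> \<in> {\<sigma> \<in> c. \<tau> \<subseteq> \<sigma>}"
      then have "\<sigma> \<subseteq> Y \<and> card \<sigma> = Suc (card \<tau>) \<and> \<tau> \<subseteq> \<sigma>"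
        using c(1) \<tau>(2) by (auto simp: bd_simplex)
      then have "\<sigma> \<in> (\<lambda>x. insert x \<tau>) ` (Y - \<tau>)"
        by (subst cofaces_in_simplex[OF Y(1) \<tau>(1), symmetric]) simp
      then have "\<sigma> = insert a \<tau> \<or> \<sigma> = insert b \<tau>" unfolding \<tau>(3) by blast
      moreover have "insert a \<tau> = Y - {b}" "insert b \<tau> = Y - {a}"
        using that(1,2) \<open>a \<noteq> b\<close> unfolding \<tau>_def by auto
      ultimately show "\<sigma> \<in> {Y - {a}, Y - {b}}" by auto
    qed
    moreover have "\<tau> \<subseteq> Y - {a}" unfolding \<tau>_def by blast
    ultimately have "{\<sigma> \<in> c. \<tau> \<subseteq> \<sigma>} = {Y - {a}}"
      using \<open>Y - {b} \<notin> c\<close> that(3) by blast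
    then have "\<tau> \<in> bd k c" using \<tau>(2) \<open>1 \<le> k\<close> unfolding bd_def by simp
    then show False using c(2) by simp
  qed
  show ?thesis
  proof (cases "c = {}")
    case False
    then obtain a where "a \<in> Y" "Y - {a} \<in> c" using c(1) unfolding facets by blast
    then have "(\<lambda>b. Y - {b}) ` Y \<subseteq> c" using closed by blast
    then show ?thesis using c(1) unfolding facets by blast
  qed simp
qed

lemma finite_bd_simplex: "finite Y \<Longrightarrow> finite (bd (Suc k) {Y})"
  unfolding bd_simplex by (rule rev_finite_subset[of "Pow Y"]) auto

lemma homology_simplex:
  assumes Y: "finite Y" "card Y = k + 2" and "1 \<le> k"
  shows "card (homology {\<sigma>. \<sigma> \<noteq> {} \<and> \<sigma> \<subseteq> Y} k) = 1"
proof -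
  let ?S = "{\<sigma>. \<sigma> \<noteq> {} \<and> \<sigma> \<subseteq> Y}" and ?faces = "bd (k + 1) {Y}"
  have "{\<sigma> \<in> ?S. card \<sigma> = k + 1 + 1} = {Y}"
  proof (intro set_eqI iffI)
    fix \<sigma> assume "\<sigma> \<in> {\<sigma> \<in> ?S. card \<sigma> = k + 1 + 1}"
    then have "\<sigma> \<subseteq> Y" "card \<sigma> = card Y" using Y by auto
    then show "\<sigma> \<in> {Y}" using card_subset_eq[OF Y(1)] by blast
  qed (use Y in auto)
  then have "chains ?S (k + 1) = {{}, {Y}}" unfolding chains_def by (auto simp: subset_singleton_iff)
  then have B: "boundaries ?S k = {{}, ?faces}" unfolding boundaries_def by simp
  have "{\<sigma> \<in> ?S. card \<sigma> = k + 1} = ?faces" by (auto simp: bd_simplex)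
  then have "chains ?S k = Pow ?faces"
    unfolding chains_def using finite_subset[OF _ finite_bd_simplex[OF Y(1)]] by auto
  then have "cycles ?S k = {{}, ?faces}"
    using simplex_cycle_cases[OF Y \<open>1 \<le> k\<close>] bd_bd_simplex[OF Y]
    unfolding cycles_def by (intro set_eqI iffI) auto
  moreover have "hclass {} {{}, ?faces} = hclass ?faces {{}, ?faces}"
    unfolding hclass_def chain_add_def by auto
  ultimately show ?thesis unfolding homology_def B by simp
qed

lemma homology_simplex_boundary:
  assumes Y: "finite Y" "card Y = k + 2"
  shows "card (homology {\<sigma>. \<sigma> \<noteq> {} \<and> \<sigma> \<subset> Y} k) \<noteq> 1"
proof (rule homology_card_ne_1)
  let ?S = "{\<sigma>. \<sigma> \<noteq> {} \<and> \<sigma> \<subset> Y}" and ?faces = "bd (k + 1) {Y}"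
  show "\<forall>\<sigma>\<in>?S. card \<sigma> \<noteq> k + 2"
  proof
    fix \<sigma> assume "\<sigma> \<in> ?S"
    then have "card \<sigma> < card Y" using psubset_card_mono[OF Y(1)] by blast
    then show "card \<sigma> \<noteq> k + 2" using Y(2) by simp
  qed
  have "?faces \<subseteq> {\<sigma> \<in> ?S. card \<sigma> = k + 1}"
  proof
    fix \<sigma> assume "\<sigma> \<in> ?faces"
    then have "\<sigma> \<subseteq> Y" "card \<sigma> = k + 1" by (simp_all add: bd_simplex)
    moreover from this have "\<sigma> \<noteq> Y" "\<sigma> \<noteq> {}" using Y(2) by auto
    ultimately show "\<sigma> \<in> {\<sigma> \<in> ?S. card \<sigma> = k + 1}" by auto
  qed
  then show "?faces \<in> cycles ?S k"
    unfolding cycles_def chains_def using bd_bd_simplex[OF Y] finite_bd_simplex[OF Y(1)] by simp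
  have "Y \<noteq> {}" using Y(2) by auto
  then obtain a where "a \<in> Y" by blast
  then have "Y - {a} \<in> ?faces" using Y by (simp add: bd_simplex card_Diff_singleton)
  then show "?faces \<noteq> {}" by blast
qed

section \<open>Clusters along the facets of a simplex\<close>

lemma MCF_subset_Pow:
  assumes "mcf_data X M ts P"
  shows "MCF M ts P t \<subseteq> Pow X"
  using mcf_data_cluster_subset[OF assms] unfolding MCF_def by blast

lemma cdim_ge:
  assumes "finite S" "\<sigma> \<in> S"
  shows "card \<sigma> - 1 \<le> cdim S"
  unfolding cdim_def using assms by (simp add: diff_le_mono)

(* At scale m \<le> k + 1 the only nontrivial cluster is the facet of the simplex {..k + 1} opposite
   to the vertex m; the final scale k + 2, where everything merges, only serves to make dim K = k + 1. *)
definition facet_partitions :: "nat \<Rightarrow> nat \<Rightarrow> nat set set" where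
  "facet_partitions k m = (if m \<le> k + 1 then {{..k + 1} - {m}, {m}} else {{..k + 1}})"

lemma facet_partitions_mcf_data: "mcf_data {..k + 1} (k + 3) real (facet_partitions k)"
proof -
  have "{..k + 1} - {m} \<noteq> {}" for m :: nat by (cases m) auto
  then have "partition_on {..k + 1} (facet_partitions k m)" for m
    by (auto simp: facet_partitions_def partition_on_def disjoint_def)
  then show ?thesis unfolding mcf_data_def by (auto intro: strict_mono_onI)
qed

lemma MCF_facet_partitions:
  "MCF (k + 3) real (facet_partitions k) (real (k + 1)) = {\<sigma>. \<sigma> \<noteq> {} \<and> \<sigma> \<subset> {..k + 1}}"
proof (intro set_eqI iffI)
  fix \<sigma> assume "\<sigma> \<in> MCF (k + 3) real (facet_partitions k) (real (k + 1))"
  then obtain l C where "\<sigma> \<noteq> {}" "real l \<le> real (k + 1)" "C \<in> facet_partitions k l" "\<sigma> \<subseteq> C"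
    unfolding MCF_def by blast
  moreover from this have "l \<le> k + 1" by linarith
  moreover have "{l} \<noteq> {..k + 1}"
  proof
    assume "{l} = {..k + 1}"
    then have "card {l} = card {..k + 1}" by (rule arg_cong)
    then show False by simp
  qed
  ultimately have "C \<subset> {..k + 1}" unfolding facet_partitions_def by auto
  then show "\<sigma> \<in> {\<sigma>. \<sigma> \<noteq> {} \<and> \<sigma> \<subset> {..k + 1}}"
    using \<open>\<sigma> \<noteq> {}\<close> \<open>\<sigma> \<subseteq> C\<close> by (simp add: subset_psubset_trans)
next
  fix \<sigma> assume "\<sigma> \<in> {\<sigma>. \<sigma> \<noteq> {} \<and> \<sigma> \<subset> {..k + 1}}"
  then obtain l where "\<sigma> \<noteq> {}" "l \<le> k + 1" "\<sigma> \<subseteq> {..k + 1} - {l}" by blast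
  moreover have "{..k + 1} - {l} \<in> facet_partitions k l"
    using \<open>l \<le> k + 1\<close> by (simp add: facet_partitions_def)
  moreover have "l < k + 3" "real l \<le> real (k + 1)" using \<open>l \<le> k + 1\<close> by simp_all
  ultimately show "\<sigma> \<in> MCF (k + 3) real (facet_partitions k) (real (k + 1))"
    unfolding MCF_def by blast
qed

lemma CAG_edge_facet_partitions:
  assumes "1 \<le> k" "x \<le> k + 1" "y \<le> k + 1" "x \<noteq> y"
  shows "CAG_edge (k + 3) real (facet_partitions k) (real (k + 1)) x y"
proof -
  define m :: nat where "m = (if x \<noteq> 0 \<and> y \<noteq> 0 then 0 else if x \<noteq> 1 \<and> y \<noteq> 1 then 1 else 2)"
  have "m \<le> 2" "m \<noteq> x" "m \<noteq> y" unfolding m_def by auto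
  then have "m \<le> k + 1" using assms(1) by simp
  then have "m < k + 3" "real m \<le> real (k + 1)" "{..k + 1} - {m} \<in> facet_partitions k m"
    by (simp_all add: facet_partitions_def)
  moreover have "x \<in> {..k + 1} - {m}" "y \<in> {..k + 1} - {m}"
    using assms(2,3) \<open>m \<noteq> x\<close> \<open>m \<noteq> y\<close> by auto
  ultimately have "\<exists>l<k + 3. real l \<le> real (k + 1) \<and> (\<exists>C\<in>facet_partitions k l. x \<in> C \<and> y \<in> C)"
    by (intro exI[of _ m] conjI bexI[of _ "{..k + 1} - {m}"])
  then show ?thesis using CAG_edge_iff[OF facet_partitions_mcf_data] assms(4) by simp
qed

lemma CAG_clique_facet_partitions:
  assumes "1 \<le> k"
  shows "CAG_clique {..k + 1} (k + 3) real (facet_partitions k) (real (k + 1))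
           = {\<sigma>. \<sigma> \<noteq> {} \<and> \<sigma> \<subseteq> {..k + 1}}"
proof -
  have "finite \<sigma>" if "\<sigma> \<subseteq> {..k + 1}" for \<sigma> :: "nat set"
    using that by (rule finite_subset) simp
  then show ?thesis
    unfolding CAG_clique_def clique_complex_def
    using CAG_edge_facet_partitions[OF assms] by (auto simp: subset_iff)
qed

lemma cdim_MCF_facet_partitions:
  "k + 1 \<le> cdim (MCF (k + 3) real (facet_partitions k) (real (k + 2)))"
proof -
  let ?K = "MCF (k + 3) real (facet_partitions k) (real (k + 2))"
  have "{..k + 1} \<in> facet_partitions k (k + 2)" by (simp add: facet_partitions_def)
  then have "{..k + 1} \<in> ?K" unfolding MCF_def
    by (intro CollectI conjI exI[of _ "k + 2"] bexI[of _ "{..k + 1}"]) auto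
  moreover have "finite ?K"
    using MCF_subset_Pow[OF facet_partitions_mcf_data] by (rule finite_subset) simp
  ultimately show ?thesis using cdim_ge[of ?K "{..k + 1}"] by simp
qed

theorem proposition6:
  fixes X :: "'a set" and M :: nat and ts :: "nat \<Rightarrow> real" and P :: "nat \<Rightarrow> 'a set set"
  assumes "mcf_data X M ts P"
  shows "(\<forall>t \<ge> ts 0. \<forall>p \<ge> 0.
            pers_homology 0 p (CAG_clique X M ts P) t = pers_homology 0 p (MCF M ts P) t)
       \<and> (\<forall>k \<ge> 1. \<exists>(Y :: nat set) N us Q. mcf_data Y N us Q
            \<and> k \<le> cdim (MCF N us Q (us (N - 1))) - 1
            \<and> (\<exists>t \<ge> us 0. \<exists>p \<ge> 0.
                 card (pers_homology k p (CAG_clique Y N us Q) t)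
                   \<noteq> card (pers_homology k p (MCF N us Q) t)))"
proof (intro conjI allI impI)
  fix t p :: real
  assume "ts 0 \<le> t" "0 \<le> p"
  then show "pers_homology 0 p (CAG_clique X M ts P) t = pers_homology 0 p (MCF M ts P) t"
    by (intro pers_homology_0_cong) (simp_all add: CAG_clique_eq_MCF_edges[OF assms])
next
  fix k :: nat
  assume "1 \<le> k"
  let ?Q = "facet_partitions k"
  have "card (pers_homology k 0 (CAG_clique {..k + 1} (k + 3) real ?Q) (real (k + 1))) = 1"
    unfolding pers_homology_0 CAG_clique_facet_partitions[OF \<open>1 \<le> k\<close>]
    by (rule homology_simplex) (use \<open>1 \<le> k\<close> in simp_all)
  moreover have "card (pers_homology k 0 (MCF (k + 3) real ?Q) (real (k + 1))) \<noteq> 1"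
    unfolding pers_homology_0 MCF_facet_partitions by (rule homology_simplex_boundary) simp_all
  ultimately show "\<exists>(Y :: nat set) N us Q. mcf_data Y N us Q
            \<and> k \<le> cdim (MCF N us Q (us (N - 1))) - 1
            \<and> (\<exists>t \<ge> us 0. \<exists>p \<ge> 0.
                 card (pers_homology k p (CAG_clique Y N us Q) t)
                   \<noteq> card (pers_homology k p (MCF N us Q) t))"
    using facet_partitions_mcf_data[of k] cdim_MCF_facet_partitions[of k]
    by (intro exI[of _ "{..k + 1}"] exI[of _ "k + 3"] exI[of _ real] exI[of _ ?Q] conjI
        exI[of _ "real (k + 1)"] exI[of _ 0]) auto
qed

end
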